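(* Let $n\ge1$ and let $k_1\le k_2\le\cdots\le k_n$ be integers. Then $$\sum_{A} (-1)^{\#\{\text{special little triangles in }A\}+\#\{\text{entries of }A\text{ decorated with }\nwarrow\nearrow\}} \;=\; \sum_{G} 2^{r(G)},$$ where the left sum is over all arrowed Gelfand–Tsetlin patterns $A$ with bottom row $k_1,\ldots,k_n$, and the right sum is over all (undecorated) Gelfand–Tsetlin patterns $G$ with bottom row $k_1,\ldots,k_n$ such that no row other than the bottom row contains three equal entries; here $r(G)$ is the number of entries of $G$ that are not equal to both their $\nwarrow$-neighbor and their $\nearrow$-neighbor.
   Context: A Gelfand–Tsetlin pattern with $n$ rows is a triangular array of integers $(a_{i,j})_{1\le j\le i\le n}$, row $i$ being $a_{i,1},\ldots,a_{i,i}$, drawn so that $a_{i-1,j}$ sits between $a_{i,j}$ and $a_{i,j+1}$, satisfying $a_{i+1,j}\le a_{i,j}\le a_{i+1,j+1}$ for all $1\le j\le i<n$. Row $n$ is the bottom row. For an entry $a_{i,j}$: its $\nwarrow$-neighbor is $a_{i-1,j-1}$ and its $\nearrow$-neighbor is $a_{i-1,j}$ (when they exist; an entry lacking one of these neighbors is in particular not equal to both), its $\swarrow$-neighbor is $a_{i+1,j}$ and its $\searrow$-neighbor is $a_{i+1,j+1}$, and its left/right neighbors are $a_{i,j-1}$, $a_{i,j+1}$. An arrowed Gelfand–Tsetlin pattern is a Gelfand–Tsetlin pattern in which each entry either carries no decoration or carries exactly one decoration from $\{\nwarrow,\nearrow,\nwarrow\nearrow\}$ (the last one is called the double arrow), subject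 to: if an entry $a$ equals its $\nearrow$-neighbor and is decorated with $\nearrow$ or $\nwarrow\nearrow$, then the entry to the right of $a$ in the same row also equals $a$ and is decorated with $\nwarrow$ or $\nwarrow\nearrow$; and if $a$ equals its $\nwarrow$-neighbor and is decorated with $\nwarrow$ or $\nwarrow\nearrow$, then the entry to the left of $a$ in the same row also equals $a$ and is decorated with $\nearrow$ or $\nwarrow\nearrow$. A special little triangle is an entry $a$ that equals both its $\swarrow$-neighbor $b$ and its $\searrow$-neighbor $c$, where $b$ is decorated with $\nearrow$ or $\nwarrow\nearrow$ and $c$ is decorated with $\nwarrow$ or $\nwarrow\nearrow$. *)

theory Defs
  imports Main
begin

text \<open>A pattern is a function nat => nat => int; entries outside the triangle are
  normalised to 0 (and decorations to NoArrow) so each pattern has a unique representation.\<close>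

definition in_tri :: "nat \<Rightarrow> nat \<Rightarrow> nat \<Rightarrow> bool" where
  "in_tri n i j \<longleftrightarrow> 1 \<le> j \<and> j \<le> i \<and> i \<le> n"

definition is_GT :: "nat \<Rightarrow> (nat \<Rightarrow> nat \<Rightarrow> int) \<Rightarrow> bool" where
  "is_GT n a \<longleftrightarrow>
     (\<forall>i j. \<not> in_tri n i j \<longrightarrow> a i j = 0) \<and>
     (\<forall>i j. 1 \<le> j \<and> j \<le> i \<and> i < n \<longrightarrow> a (i+1) j \<le> a i j \<and> a i j \<le> a (i+1) (j+1))"

definition bottom_row :: "nat \<Rightarrow> (nat \<Rightarrow> int) \<Rightarrow> (nat \<Rightarrow> nat \<Rightarrow> int) \<Rightarrow> bool" where
  "bottom_row n k a \<longleftrightarrow> (\<forall>j. 1 \<le> j \<and> j \<le> n \<longrightarrow> a n j = k j)"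

datatype deco = NoArrow | NW | NE | NWNE

definition has_NE :: "deco \<Rightarrow> bool" where
  "has_NE d \<longleftrightarrow> d = NE \<or> d = NWNE"

definition has_NW :: "deco \<Rightarrow> bool" where
  "has_NW d \<longleftrightarrow> d = NW \<or> d = NWNE"

text \<open>NW-neighbour of (i,j) is (i-1,j-1), existing iff j >= 2;
  NE-neighbour of (i,j) is (i-1,j), existing iff j < i.\<close>

definition is_arrowed_GT :: "nat \<Rightarrow> (nat \<Rightarrow> nat \<Rightarrow> int) \<Rightarrow> (nat \<Rightarrow> nat \<Rightarrow> deco) \<Rightarrow> bool" where
  "is_arrowed_GT n a d \<longleftrightarrow> is_GT n a \<and>
     (\<forall>i j. \<not> in_tri n i j \<longrightarrow> d i j = NoArrow) \<and>
     (\<forall>i j. in_tri n i j \<and> j < i \<and> a i j = a (i-1) j \<and> has_NE (d i j) \<longrightarrow>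
             a i (j+1) = a i j \<and> has_NW (d i (j+1))) \<and>
     (\<forall>i j. in_tri n i j \<and> 2 \<le> j \<and> a i j = a (i-1) (j-1) \<and> has_NW (d i j) \<longrightarrow>
             a i (j-1) = a i j \<and> has_NE (d i (j-1)))"

definition special_triangles :: "nat \<Rightarrow> (nat \<Rightarrow> nat \<Rightarrow> int) \<Rightarrow> (nat \<Rightarrow> nat \<Rightarrow> deco) \<Rightarrow> (nat \<times> nat) set" where
  "special_triangles n a d = {(i,j). in_tri n i j \<and> i < n \<and>
      a i j = a (i+1) j \<and> a i j = a (i+1) (j+1) \<and>
      has_NE (d (i+1) j) \<and> has_NW (d (i+1) (j+1))}"

definition double_arrows :: "nat \<Rightarrow> (nat \<Rightarrow> nat \<Rightarrow> deco) \<Rightarrow> (nat \<times> nat) set" where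
  "double_arrows n d = {(i,j). in_tri n i j \<and> d i j = NWNE}"

definition no_three_equal_above_bottom :: "nat \<Rightarrow> (nat \<Rightarrow> nat \<Rightarrow> int) \<Rightarrow> bool" where
  "no_three_equal_above_bottom n a \<longleftrightarrow>
     (\<forall>i j1 j2 j3. i < n \<and> 1 \<le> j1 \<and> j1 < j2 \<and> j2 < j3 \<and> j3 \<le> i \<longrightarrow>
        \<not> (a i j1 = a i j2 \<and> a i j2 = a i j3))"

text \<open>Entries not equal to both their NW- and NE-neighbour (an entry lacking one of them counts).\<close>
definition r_entries :: "nat \<Rightarrow> (nat \<Rightarrow> nat \<Rightarrow> int) \<Rightarrow> (nat \<times> nat) set" where
  "r_entries n a = {(i,j). in_tri n i j \<and>
      \<not> (2 \<le> j \<and> j < i \<and> a i j = a (i-1) (j-1) \<and> a i j = a (i-1) j)}"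

end

theory Submission
  imports Defs
begin

text \<open>
  Fix the undecorated pattern. All constraints on the decorations, and the sign, only couple
  horizontally adjacent entries of one row, so the signed sum over decorations is a product over
  rows of one-dimensional sums, each computed by a transfer matrix with two states: whether the
  decoration of the last entry contains \<nearrow>. If the row above has no three equal entries,
  every entry equal to both of its upper neighbours contributes 1 and every other entry 2. If
  some row above the bottom one has three equal entries, the row just below the topmost such
  row contributes 0.
\<close>

section \<open>Transfer matrices for weighted chains\<close>

definition chains :: "nat \<Rightarrow> 's \<Rightarrow> (nat \<Rightarrow> 's) set" where
  "chains m z = {r. \<forall>j. j \<notin> {1..m} \<longrightarrow> r j = z}"

lemma finite_chains: "finite (chains m (z::'s::finite))"
proof -
  have "finite {r. \<forall>j. (j \<in> {1..m} \<longrightarrow> r j \<in> UNIV) \<and> (j \<notin> {1..m} \<longrightarrow> r j = z)}"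
    by (rule finite_set_of_finite_funs) auto
  then show ?thesis by (simp add: chains_def)
qed

definition chain_weight ::
    "(nat \<Rightarrow> 's \<Rightarrow> 'b::comm_semiring_1) \<Rightarrow> (nat \<Rightarrow> 's \<Rightarrow> 's \<Rightarrow> 'b) \<Rightarrow> nat \<Rightarrow> (nat \<Rightarrow> 's) \<Rightarrow> 'b" where
  "chain_weight f g m r = (\<Prod>j\<in>{1..m}. f j (r j)) * (\<Prod>j\<in>{1..<m}. g j (r j) (r (j+1)))"

definition chain_sum_ending ::
    "(nat \<Rightarrow> 's \<Rightarrow> 'b::comm_semiring_1) \<Rightarrow> (nat \<Rightarrow> 's \<Rightarrow> 's \<Rightarrow> 'b) \<Rightarrow> nat \<Rightarrow> 's \<Rightarrow> 's \<Rightarrow> 'b" where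
  "chain_sum_ending f g m z y = (\<Sum>r\<in>{r\<in>chains m z. r m = y}. chain_weight f g m r)"

lemma sum_chains_by_end:
  "(\<Sum>r\<in>chains m (z::'s::finite). chain_weight f g m r) = (\<Sum>y\<in>UNIV. chain_sum_ending f g m z y)"
  unfolding chain_sum_ending_def
  by (rule sum.group[symmetric]) (auto simp: finite_chains)

lemma chain_sum_ending_1: "chain_sum_ending f g 1 z y = f 1 y"
proof -
  have "{r\<in>chains 1 z. r 1 = y} = {(\<lambda>_. z)(1 := y)}"
    unfolding chains_def by (auto simp: fun_eq_iff)
  then show ?thesis by (simp add: chain_sum_ending_def chain_weight_def)
qed

lemma chain_sum_ending_Suc:
  fixes z :: "'s::finite"
  assumes "m \<ge> 1"
  shows "chain_sum_ending f g (Suc m) z y =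
           (\<Sum>x\<in>UNIV. chain_sum_ending f g m z x * g m x y) * f (Suc m) y"
proof -
  let ?extend = "\<lambda>r. r(Suc m := y)"
  have inj: "inj_on ?extend (chains m z)"
  proof (rule inj_onI, rule ext)
    fix r s j assume "r \<in> chains m z" "s \<in> chains m z" "?extend r = ?extend s"
    then show "r j = s j"
      by (cases "j = Suc m") (auto simp: chains_def dest: fun_cong[where x = j])
  qed
  have "{r\<in>chains (Suc m) z. r (Suc m) = y} = ?extend ` chains m z"
  proof (intro equalityI subsetI)
    fix r assume r: "r \<in> {r\<in>chains (Suc m) z. r (Suc m) = y}"
    then have "r = ?extend (r(Suc m := z))" "r(Suc m := z) \<in> chains m z"
      by (auto simp: chains_def)
    then show "r \<in> ?extend ` chains m z" by blast
  qed (auto simp: chains_def)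
  then have "chain_sum_ending f g (Suc m) z y
      = (\<Sum>r\<in>chains m z. chain_weight f g (Suc m) (?extend r))"
    unfolding chain_sum_ending_def using sum.reindex[OF inj] by simp
  also have "\<dots> = (\<Sum>r\<in>chains m z. chain_weight f g m r * g m (r m) y * f (Suc m) y)"
  proof (rule sum.cong[OF refl])
    fix r assume "r \<in> chains m z"
    have "{1..<Suc m} = insert m {1..<m}" using assms by auto
    moreover have "(\<Prod>j\<in>{1..<m}. g j (?extend r j) (?extend r (j+1)))
        = (\<Prod>j\<in>{1..<m}. g j (r j) (r (j+1)))"
      by (rule prod.cong) auto
    moreover have "(\<Prod>j\<in>{1..m}. f j (?extend r j)) = (\<Prod>j\<in>{1..m}. f j (r j))"
      by (rule prod.cong) auto
    ultimately show "chain_weight f g (Suc m) (?extend r)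
        = chain_weight f g m r * g m (r m) y * f (Suc m) y"
      using assms by (simp add: chain_weight_def prod.nat_ivl_Suc' ac_simps)
  qed
  also have "\<dots> = (\<Sum>x\<in>UNIV. \<Sum>r\<in>{r\<in>chains m z. r m = x}.
                        chain_weight f g m r * g m x y * f (Suc m) y)"
    by (subst sum.group[symmetric, where g = "\<lambda>r. r m"]) (auto simp: finite_chains intro!: sum.cong)
  finally show ?thesis
    by (simp add: chain_sum_ending_def sum_distrib_right)
qed

definition triangular_arrays :: "nat \<Rightarrow> 's \<Rightarrow> (nat \<Rightarrow> nat \<Rightarrow> 's) set" where
  "triangular_arrays n z = {d. \<forall>i j. \<not> in_tri n i j \<longrightarrow> d i j = z}"

lemma triangular_arrays_0: "triangular_arrays 0 z = {\<lambda>_ _. z}"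
  unfolding triangular_arrays_def in_tri_def by (auto simp: fun_eq_iff)

lemma triangular_arrays_Suc:
  "triangular_arrays (Suc n) z =
     (\<lambda>(d, r). d(Suc n := r)) ` (triangular_arrays n z \<times> chains (Suc n) z)"
proof (intro equalityI subsetI)
  fix d assume d: "d \<in> triangular_arrays (Suc n) z"
  then have "d(Suc n := (\<lambda>_. z)) \<in> triangular_arrays n z" "d (Suc n) \<in> chains (Suc n) z"
    unfolding triangular_arrays_def chains_def in_tri_def by auto
  moreover have "d = (\<lambda>(d', r). d'(Suc n := r)) (d(Suc n := (\<lambda>_. z)), d (Suc n))"
    by simp
  ultimately show "d \<in> (\<lambda>(d, r). d(Suc n := r)) ` (triangular_arrays n z \<times> chains (Suc n) z)"
    by blast
qed (auto simp: triangular_arrays_def chains_def in_tri_def)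

lemma inj_on_triangular_arrays_Suc:
  "inj_on (\<lambda>(d, r). d(Suc n := r)) (triangular_arrays n z \<times> chains (Suc n) z)"
proof (rule inj_onI, clarify, rule conjI)
  fix d r d' r'
  assume d: "d \<in> triangular_arrays n z" and d': "d' \<in> triangular_arrays n z"
    and eq: "d(Suc n := r) = d'(Suc n := r')"
  show "d = d'"
  proof
    fix i show "d i = d' i"
      using d d' fun_cong[OF eq, of i]
      by (cases "i = Suc n") (auto simp: triangular_arrays_def in_tri_def)
  qed
  show "r = r'" using fun_cong[OF eq, of "Suc n"] by simp
qed

lemma finite_triangular_arrays: "finite (triangular_arrays n (z::'s::finite))"
  by (induction n) (simp_all add: triangular_arrays_0 triangular_arrays_Suc finite_chains)

lemma sum_triangular_arrays_prod_rows:
  fixes \<Phi> :: "nat \<Rightarrow> (nat \<Rightarrow> 's) \<Rightarrow> 'b::comm_semiring_1"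
  shows "(\<Sum>d\<in>triangular_arrays n z. \<Prod>i\<in>{1..n}. \<Phi> i (d i)) = (\<Prod>i\<in>{1..n}. \<Sum>r\<in>chains i z. \<Phi> i r)"
proof (induction n)
  case 0
  then show ?case by (simp add: triangular_arrays_0)
next
  case (Suc n)
  have "(\<Sum>d\<in>triangular_arrays (Suc n) z. \<Prod>i\<in>{1..Suc n}. \<Phi> i (d i))
      = (\<Sum>(d, r)\<in>triangular_arrays n z \<times> chains (Suc n) z. \<Prod>i\<in>{1..Suc n}. \<Phi> i ((d(Suc n := r)) i))"
    unfolding triangular_arrays_Suc
    by (subst sum.reindex[OF inj_on_triangular_arrays_Suc]) (simp add: case_prod_beta)
  also have "\<dots> = (\<Sum>(d, r)\<in>triangular_arrays n z \<times> chains (Suc n) z.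
                        (\<Prod>i\<in>{1..n}. \<Phi> i (d i)) * \<Phi> (Suc n) r)"
    by (intro sum.cong refl) (auto simp: prod.nat_ivl_Suc' intro!: prod.cong)
  also have "\<dots> = (\<Sum>d\<in>triangular_arrays n z. \<Prod>i\<in>{1..n}. \<Phi> i (d i)) *
                     (\<Sum>r\<in>chains (Suc n) z. \<Phi> (Suc n) r)"
    by (simp add: sum_product sum.cartesian_product)
  finally show ?case
    using Suc.IH by (simp add: prod.nat_ivl_Suc')
qed

lemma prod_if_else_0:
  fixes g :: "'a \<Rightarrow> 'b::comm_semiring_1"
  shows "finite A \<Longrightarrow>
    (\<Prod>x\<in>A. if P x then g x else 0) = (if \<forall>x\<in>A. P x then \<Prod>x\<in>A. g x else 0)"
  by (induction A rule: finite_induct) auto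

lemma prod_rows_if_power_card:
  fixes x :: "'a::comm_monoid_mult" and n :: nat
  assumes "\<And>i. finite (B i)" and "S \<subseteq> (SIGMA i:{1..n}. B i)"
    and "\<And>i j. i \<in> {1..n} \<Longrightarrow> j \<in> B i \<Longrightarrow> P i j \<longleftrightarrow> (i, j) \<in> S"
  shows "(\<Prod>i\<in>{1..n}. \<Prod>j\<in>B i. if P i j then x else 1) = x ^ card S"
proof -
  have "(\<Prod>i\<in>{1..n}. \<Prod>j\<in>B i. if P i j then x else 1)
      = (\<Prod>i\<in>{1..n}. \<Prod>j\<in>B i. if (i, j) \<in> S then x else 1)"
    using assms(3) by (intro prod.cong) auto
  also have "\<dots> = (\<Prod>c\<in>(SIGMA i:{1..n}. B i). if c \<in> S then x else 1)"
    using assms(1) by (subst prod.Sigma) (simp_all add: split_beta)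
  also have "\<dots> = x ^ card S"
    using assms(1,2) prod.inter_restrict[of "SIGMA i:{1..n}. B i" "\<lambda>_. x" S]
    by (simp add: Int_absorb1)
  finally show ?thesis .
qed

section \<open>Decorated rows\<close>

text \<open>
  A row of length \<open>m\<close> in abstract form: \<open>L j\<close> and \<open>R j\<close> say that entry \<open>j\<close> equals its
  \<nwarrow>- resp. \<nearrow>-neighbour, and \<open>T j\<close> that entry \<open>j\<close>, its \<nearrow>-neighbour and its right
  neighbour are equal (a flat little triangle). The rules of arrowed patterns then constrain single
  entries and, across flat triangles only, pairs of adjacent entries; special little triangles are
  the flat ones whose two lower entries point into them.
\<close>

definition site_ok :: "(nat \<Rightarrow> bool) \<Rightarrow> (nat \<Rightarrow> bool) \<Rightarrow> (nat \<Rightarrow> bool) \<Rightarrow> nat \<Rightarrow> deco \<Rightarrow> bool" where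
  "site_ok L R T j x \<longleftrightarrow> \<not> (R j \<and> \<not> T j \<and> has_NE x) \<and> \<not> (L j \<and> \<not> T (j-1) \<and> has_NW x)"

definition link_ok :: "(nat \<Rightarrow> bool) \<Rightarrow> nat \<Rightarrow> deco \<Rightarrow> deco \<Rightarrow> bool" where
  "link_ok T j x y \<longleftrightarrow> (T j \<longrightarrow> has_NE x = has_NW y)"

definition site_weight :: "(nat \<Rightarrow> bool) \<Rightarrow> (nat \<Rightarrow> bool) \<Rightarrow> (nat \<Rightarrow> bool) \<Rightarrow> nat \<Rightarrow> deco \<Rightarrow> int" where
  "site_weight L R T j x = (if site_ok L R T j x then if x = NWNE then -1 else 1 else 0)"

definition link_weight :: "(nat \<Rightarrow> bool) \<Rightarrow> nat \<Rightarrow> deco \<Rightarrow> deco \<Rightarrow> int" where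
  "link_weight T j x y =
     (if link_ok T j x y then if T j \<and> has_NE x \<and> has_NW y then -1 else 1 else 0)"

definition row_total :: "(nat \<Rightarrow> bool) \<Rightarrow> (nat \<Rightarrow> bool) \<Rightarrow> (nat \<Rightarrow> bool) \<Rightarrow> nat \<Rightarrow> int" where
  "row_total L R T m = (\<Sum>r\<in>chains m NoArrow. chain_weight (site_weight L R T) (link_weight T) m r)"

text \<open>The two states of the transfer matrix: a link only sees whether the left decoration
  contains \<nearrow>.\<close>

definition row_sum_without_NE :: "(nat \<Rightarrow> bool) \<Rightarrow> (nat \<Rightarrow> bool) \<Rightarrow> (nat \<Rightarrow> bool) \<Rightarrow> nat \<Rightarrow> int" where
  "row_sum_without_NE L R T m =
     (\<Sum>y\<in>{NoArrow, NW}. chain_sum_ending (site_weight L R T) (link_weight T) m NoArrow y)"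

definition row_sum_with_NE :: "(nat \<Rightarrow> bool) \<Rightarrow> (nat \<Rightarrow> bool) \<Rightarrow> (nat \<Rightarrow> bool) \<Rightarrow> nat \<Rightarrow> int" where
  "row_sum_with_NE L R T m =
     (\<Sum>y\<in>{NE, NWNE}. chain_sum_ending (site_weight L R T) (link_weight T) m NoArrow y)"

lemma UNIV_deco: "(UNIV :: deco set) = {NoArrow, NW, NE, NWNE}"
  using deco.exhaust by auto

instance deco :: finite
  by standard (simp add: UNIV_deco)

lemmas decoration_weight_defs =
  row_sum_without_NE_def row_sum_with_NE_def site_weight_def link_weight_def site_ok_def link_ok_def
  has_NE_def has_NW_def UNIV_deco

locale row_shape =
  fixes L R T :: "nat \<Rightarrow> bool" and m :: nat
  assumes not_L_1: "\<not> L 1"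
    and tie_sides: "1 \<le> j \<Longrightarrow> T j \<Longrightarrow> R j \<and> L (Suc j)"
    and tie_bound: "T j \<Longrightarrow> j < m"
begin

abbreviation "F \<equiv> row_sum_without_NE L R T"
abbreviation "A \<equiv> row_sum_with_NE L R T"

lemma row_total_split: "row_total L R T m = F m + A m"
  by (simp add: row_total_def sum_chains_by_end UNIV_deco
      row_sum_without_NE_def row_sum_with_NE_def)

lemma row_sums_1: "F 1 = 2" "A 1 = 0"
  using not_L_1
  unfolding row_sum_without_NE_def row_sum_with_NE_def chain_sum_ending_1
  by (simp_all add: decoration_weight_defs)

lemma row_sums_Suc_untied:
  assumes "1 \<le> j" "\<not> T j"
  shows "F (Suc j) = (F j + A j) * (if L (Suc j) then 1 else 2)"
    and "A (Suc j) = (F j + A j) * (if L (Suc j) \<and> \<not> (R (Suc j) \<and> \<not> T (Suc j)) then 1 else 0)"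
  using assms by (auto simp: decoration_weight_defs chain_sum_ending_Suc algebra_simps)

lemma row_sums_Suc_tied:
  assumes "1 \<le> j" "T j"
  shows "F (Suc j) = F j - A j"
    and "A (Suc j) = (if R (Suc j) \<and> \<not> T (Suc j) then 0 else F j + A j)"
  using assms by (auto simp: decoration_weight_defs chain_sum_ending_Suc algebra_simps)

lemma row_total_eq_prod:
  assumes "1 \<le> m" and no_three: "\<And>j. \<not> (L j \<and> T j \<and> R (Suc j))"
  shows "row_total L R T m = (\<Prod>t\<in>{1..m}. if L t \<and> R t then 1 else 2)"
proof -
  define P where "P j = (\<Prod>t\<in>{1..j}. if L t \<and> R t then 1 else 2 :: int)" for j
  have P_Suc: "P (Suc j) = P j * (if L (Suc j) \<and> R (Suc j) then 1 else 2)" for j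
    unfolding P_def by (simp add: prod.nat_ivl_Suc')
  have inv: "(\<not> T j \<longrightarrow> F j + A j = P j)
           \<and> (T j \<and> \<not> L j \<longrightarrow> F j = P j \<and> A j = 0)
           \<and> (T j \<and> L j \<longrightarrow> F j = P j \<and> A j = P j)" if "1 \<le> j" for j
    using that
  proof (induction j rule: nat_induct_at_least)
    case base
    then show ?case using row_sums_1 not_L_1 by (simp add: P_def)
  next
    case (Suc j)
    have T_Suc: "T (Suc j) \<Longrightarrow> R (Suc j)" using tie_sides[of "Suc j"] by simp
    show ?case
    proof (cases "T j")
      case False
      then show ?thesis
        using row_sums_Suc_untied[OF Suc.hyps False] Suc.IH T_Suc by (auto simp: P_Suc)
    next
      case True
      have "L (Suc j)" using tie_sides[OF Suc.hyps True] by blast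
      moreover have "\<not> R (Suc j) \<and> \<not> T (Suc j)" if "L j"
        using no_three[of j] that True T_Suc by blast
      ultimately show ?thesis
        using row_sums_Suc_tied[OF Suc.hyps True] Suc.IH True T_Suc by (auto simp: P_Suc)
    qed
  qed
  have "\<not> T m" using tie_bound by blast
  then show ?thesis using inv[OF \<open>1 \<le> m\<close>] by (simp add: row_total_split P_def)
qed

lemma row_sum_with_NE_eq_0: "1 \<le> j \<Longrightarrow> \<not> L j \<Longrightarrow> A j = 0"
proof (induction j rule: nat_induct_at_least)
  case base
  then show ?case using row_sums_1 by simp
next
  case (Suc j)
  then have "\<not> T j" using tie_sides by blast
  then show ?case using row_sums_Suc_untied[OF Suc.hyps] Suc.prems by simp
qed

lemma row_sums_stay_0:
  assumes "1 \<le> j" "F j = 0" "A j = 0" "j \<le> j'"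
  shows "F j' = 0 \<and> A j' = 0"
  using assms(4)
proof (induction j' rule: dec_induct)
  case base
  then show ?case using assms by simp
next
  case (step i)
  then have "1 \<le> i" using assms by simp
  then show ?case
    using row_sums_Suc_tied[OF \<open>1 \<le> i\<close>] row_sums_Suc_untied[OF \<open>1 \<le> i\<close>] step.IH
    by (cases "T i") simp_all
qed

text \<open>The hypotheses on \<open>p\<close> say that the row above has three equal entries \<open>p, p+1, p+2\<close> but
  no fourth equal entry next to them.\<close>

lemma row_total_eq_0:
  assumes "1 \<le> p" and L: "L (Suc p)" and T: "T (Suc p)" and R: "R (p+2)"
    and left: "T p \<Longrightarrow> \<not> L p" and right: "T (p+2) \<Longrightarrow> \<not> R (p+3)"
  shows "row_total L R T m = 0"
proof -
  have "Suc p < m" using tie_bound[OF T] .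
  obtain Y where Y: "F (Suc p) = Y" "A (Suc p) = Y"
  proof (cases "T p")
    case True
    then have "A p = 0" using row_sum_with_NE_eq_0 \<open>1 \<le> p\<close> left by blast
    then show ?thesis using that row_sums_Suc_tied[OF \<open>1 \<le> p\<close> True] T by simp
  next
    case False
    then show ?thesis using that row_sums_Suc_untied[OF \<open>1 \<le> p\<close> False] T L by simp
  qed
  have F2: "F (p+2) = 0" and A2: "A (p+2) = (if R (p+2) \<and> \<not> T (p+2) then 0 else 2 * Y)"
    using row_sums_Suc_tied[where j="Suc p"] T Y by simp_all
  show ?thesis
  proof (cases "T (p+2)")
    case False
    then have "F m = 0 \<and> A m = 0"
      using row_sums_stay_0[of "p+2" m] F2 A2 R \<open>Suc p < m\<close> by simp
    then show ?thesis by (simp add: row_total_split)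
  next
    case True
    then have "\<not> R (p+3)" "\<not> T (p+3)" "p + 3 \<le> m"
      using right tie_sides[of "p+3"] tie_bound[of "p+2"] by auto
    then have F3: "F (p+3) + A (p+3) = 0"
      using row_sums_Suc_tied[where j="p+2"] True F2 A2 by (simp add: numeral_3_eq_3)
    show ?thesis
    proof (cases "p + 3 = m")
      case True
      then show ?thesis using F3 by (simp add: row_total_split)
    next
      case False
      have "F (p+4) = 0 \<and> A (p+4) = 0"
        using row_sums_Suc_untied[where j="p+3"] \<open>\<not> T (p+3)\<close> F3
        by (simp add: eval_nat_numeral)
      then have "F m = 0 \<and> A m = 0"
        using row_sums_stay_0[of "p+4" m] \<open>p + 3 \<le> m\<close> False by simp
      then show ?thesis by (simp add: row_total_split)
    qed
  qed
qed

end

section \<open>From patterns to rows\<close>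

definition equals_NW :: "(nat \<Rightarrow> nat \<Rightarrow> int) \<Rightarrow> nat \<Rightarrow> nat \<Rightarrow> bool" where
  "equals_NW a i j \<longleftrightarrow> 2 \<le> j \<and> a i j = a (i-1) (j-1)"

definition equals_NE :: "(nat \<Rightarrow> nat \<Rightarrow> int) \<Rightarrow> nat \<Rightarrow> nat \<Rightarrow> bool" where
  "equals_NE a i j \<longleftrightarrow> j < i \<and> a i j = a (i-1) j"

definition flat_triangle :: "(nat \<Rightarrow> nat \<Rightarrow> int) \<Rightarrow> nat \<Rightarrow> nat \<Rightarrow> bool" where
  "flat_triangle a i j \<longleftrightarrow> equals_NE a i j \<and> a i (j+1) = a i j"

abbreviation pattern_site_ok :: "(nat \<Rightarrow> nat \<Rightarrow> int) \<Rightarrow> nat \<Rightarrow> nat \<Rightarrow> deco \<Rightarrow> bool" where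
  "pattern_site_ok a i \<equiv> site_ok (equals_NW a i) (equals_NE a i) (flat_triangle a i)"

abbreviation pattern_link_ok :: "(nat \<Rightarrow> nat \<Rightarrow> int) \<Rightarrow> nat \<Rightarrow> nat \<Rightarrow> deco \<Rightarrow> deco \<Rightarrow> bool" where
  "pattern_link_ok a i \<equiv> link_ok (flat_triangle a i)"

abbreviation pattern_row_total :: "(nat \<Rightarrow> nat \<Rightarrow> int) \<Rightarrow> nat \<Rightarrow> int" where
  "pattern_row_total a i \<equiv> row_total (equals_NW a i) (equals_NE a i) (flat_triangle a i) i"

lemma row_shape_pattern: "row_shape (equals_NW a i) (equals_NE a i) (flat_triangle a i) i"
  by unfold_locales (auto simp: equals_NW_def equals_NE_def flat_triangle_def)

definition row_weight :: "(nat \<Rightarrow> nat \<Rightarrow> int) \<Rightarrow> nat \<Rightarrow> (nat \<Rightarrow> deco) \<Rightarrow> int" where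
  "row_weight a i = chain_weight (site_weight (equals_NW a i) (equals_NE a i) (flat_triangle a i))
                                 (link_weight (flat_triangle a i)) i"

lemma arrowed_GT_iff_ok:
  assumes "is_GT n a" "d \<in> triangular_arrays n NoArrow"
  shows "is_arrowed_GT n a d \<longleftrightarrow>
           (\<forall>i\<in>{1..n}. \<forall>j\<in>{1..i}. pattern_site_ok a i j (d i j)) \<and>
           (\<forall>i\<in>{1..n}. \<forall>j\<in>{1..<i}. pattern_link_ok a i j (d i j) (d i (j+1)))"
    (is "_ \<longleftrightarrow> ?sites \<and> ?links")
proof
  assume arrowed: "is_arrowed_GT n a d"
  have NE_rule: "a i (j+1) = a i j \<and> has_NW (d i (j+1))"
    if "in_tri n i j" "j < i" "a i j = a (i-1) j" "has_NE (d i j)" for i j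
    using arrowed that unfolding is_arrowed_GT_def by blast
  have NW_rule: "a i (j-1) = a i j \<and> has_NE (d i (j-1))"
    if "in_tri n i j" "2 \<le> j" "a i j = a (i-1) (j-1)" "has_NW (d i j)" for i j
    using arrowed that unfolding is_arrowed_GT_def by blast
  show "?sites \<and> ?links"
  proof (intro conjI ballI)
    fix i j assume "i \<in> {1..n}" "j \<in> {1..i}"
    then have "in_tri n i j" by (simp add: in_tri_def)
    then show "pattern_site_ok a i j (d i j)"
      using NE_rule[of i j] NW_rule[of i j]
      by (auto simp: in_tri_def site_ok_def equals_NW_def equals_NE_def flat_triangle_def)
  next
    fix i j assume "i \<in> {1..n}" "j \<in> {1..<i}"
    then have "in_tri n i j" "in_tri n i (j+1)" by (auto simp: in_tri_def)
    then show "pattern_link_ok a i j (d i j) (d i (j+1))"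
      using NE_rule[of i j] NW_rule[of i "j+1"]
      by (auto simp: in_tri_def link_ok_def equals_NE_def flat_triangle_def)
  qed
next
  assume ok: "?sites \<and> ?links"
  have "a i (j+1) = a i j \<and> has_NW (d i (j+1))"
    if "in_tri n i j" "j < i" "a i j = a (i-1) j" "has_NE (d i j)" for i j
  proof -
    have "pattern_site_ok a i j (d i j)"
      using ok that by (simp add: in_tri_def)
    then have "flat_triangle a i j"
      using that by (auto simp: site_ok_def equals_NE_def)
    then show ?thesis
      using ok that by (auto simp: in_tri_def link_ok_def flat_triangle_def)
  qed
  moreover have "a i (j-1) = a i j \<and> has_NE (d i (j-1))"
    if "in_tri n i j" "2 \<le> j" "a i j = a (i-1) (j-1)" "has_NW (d i j)" for i j
  proof -
    have "pattern_site_ok a i j (d i j)"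
      using ok that by (simp add: in_tri_def)
    then have "flat_triangle a i (j-1)"
      using that by (auto simp: site_ok_def equals_NW_def)
    moreover have "pattern_link_ok a i (j-1) (d i (j-1)) (d i j)"
    proof -
      have "i \<in> {1..n}" "j - 1 \<in> {1..<i}" "j - 1 + 1 = j"
        using that by (auto simp: in_tri_def)
      then show ?thesis using ok by metis
    qed
    ultimately show ?thesis
      using that by (auto simp: link_ok_def flat_triangle_def)
  qed
  ultimately show "is_arrowed_GT n a d"
    using assms unfolding is_arrowed_GT_def triangular_arrays_def by blast
qed

abbreviation arrowed_sign :: "nat \<Rightarrow> (nat \<Rightarrow> nat \<Rightarrow> int) \<Rightarrow> (nat \<Rightarrow> nat \<Rightarrow> deco) \<Rightarrow> int" where
  "arrowed_sign n a d \<equiv> (-1) ^ (card (special_triangles n a d) + card (double_arrows n d))"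

lemma prod_double_arrow_signs:
  "(\<Prod>i\<in>{1..n}. \<Prod>j\<in>{1..i}. if d i j = NWNE then -1 else 1) = (-1::int) ^ card (double_arrows n d)"
  by (rule prod_rows_if_power_card) (auto simp: double_arrows_def in_tri_def)

lemma prod_special_triangle_signs:
  "(\<Prod>i\<in>{1..n}. \<Prod>j\<in>{1..<i}.
      if flat_triangle a i j \<and> has_NE (d i j) \<and> has_NW (d i (j+1)) then -1 else 1)
     = (-1::int) ^ card (special_triangles n a d)"
proof -
  let ?shift = "\<lambda>(i, j). (Suc i, j)"
  have "(\<Prod>i\<in>{1..n}. \<Prod>j\<in>{1..<i}.
          if flat_triangle a i j \<and> has_NE (d i j) \<and> has_NW (d i (j+1)) then -1 else 1)
      = (-1::int) ^ card (?shift ` special_triangles n a d)"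
  proof (rule prod_rows_if_power_card)
    show "?shift ` special_triangles n a d \<subseteq> (SIGMA i:{1..n}. {1..<i})"
      by (auto simp: special_triangles_def in_tri_def)
    fix i j assume ij: "i \<in> {1..n}" "j \<in> {1..<i}"
    show "flat_triangle a i j \<and> has_NE (d i j) \<and> has_NW (d i (j+1)) \<longleftrightarrow>
            (i, j) \<in> ?shift ` special_triangles n a d"
    proof
      assume "flat_triangle a i j \<and> has_NE (d i j) \<and> has_NW (d i (j+1))"
      then have "(i - 1, j) \<in> special_triangles n a d"
        using ij by (auto simp: special_triangles_def in_tri_def flat_triangle_def equals_NE_def)
      moreover have "(i, j) = ?shift (i - 1, j)" using ij by auto
      ultimately show "(i, j) \<in> ?shift ` special_triangles n a d"
        by (rule rev_image_eqI)
    qed (auto simp: special_triangles_def in_tri_def flat_triangle_def equals_NE_def)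
  qed simp
  also have "card (?shift ` special_triangles n a d) = card (special_triangles n a d)"
    by (rule card_image) (auto simp: inj_on_def)
  finally show ?thesis .
qed

lemma prod_row_weight:
  "(\<Prod>i\<in>{1..n}. row_weight a i (d i)) =
     (if (\<forall>i\<in>{1..n}. \<forall>j\<in>{1..i}. pattern_site_ok a i j (d i j)) \<and>
         (\<forall>i\<in>{1..n}. \<forall>j\<in>{1..<i}. pattern_link_ok a i j (d i j) (d i (j+1)))
      then arrowed_sign n a d else 0)"
proof -
  have "(\<Prod>i\<in>{1..n}. row_weight a i (d i)) =
     (\<Prod>i\<in>{1..n}. \<Prod>j\<in>{1..i}.
        site_weight (equals_NW a i) (equals_NE a i) (flat_triangle a i) j (d i j)) *
     (\<Prod>i\<in>{1..n}. \<Prod>j\<in>{1..<i}. link_weight (flat_triangle a i) j (d i j) (d i (j+1)))"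
    unfolding row_weight_def chain_weight_def prod.distrib ..
  also have "\<dots> =
     (if \<forall>i\<in>{1..n}. \<forall>j\<in>{1..i}. pattern_site_ok a i j (d i j)
      then (-1) ^ card (double_arrows n d) else 0) *
     (if \<forall>i\<in>{1..n}. \<forall>j\<in>{1..<i}. pattern_link_ok a i j (d i j) (d i (j+1))
      then (-1) ^ card (special_triangles n a d) else 0)"
    unfolding site_weight_def link_weight_def prod_double_arrow_signs[symmetric]
      prod_special_triangle_signs[symmetric]
    by (simp add: prod_if_else_0 cong: prod.cong)
  finally show ?thesis by (simp add: power_add)
qed

lemma sum_arrowed_decorations:
  assumes "is_GT n a"
  shows "(\<Sum>d | is_arrowed_GT n a d. arrowed_sign n a d)
       = (\<Prod>i\<in>{1..n}. pattern_row_total a i)"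
proof -
  have "{d. is_arrowed_GT n a d} = {d \<in> triangular_arrays n NoArrow. is_arrowed_GT n a d}"
    by (auto simp: triangular_arrays_def is_arrowed_GT_def)
  then have "(\<Sum>d | is_arrowed_GT n a d. arrowed_sign n a d)
      = (\<Sum>d\<in>triangular_arrays n NoArrow. \<Prod>i\<in>{1..n}. row_weight a i (d i))"
    by (simp add: sum.inter_filter finite_triangular_arrays prod_row_weight
        arrowed_GT_iff_ok[OF assms]
        cong: sum.cong del: One_nat_def)
  also have "\<dots> = (\<Prod>i\<in>{1..n}. pattern_row_total a i)"
    unfolding row_total_def row_weight_def by (rule sum_triangular_arrays_prod_rows)
  finally show ?thesis .
qed

section \<open>Gelfand-Tsetlin patterns\<close>

lemma is_GT_interlacing:
  "is_GT n a \<Longrightarrow> 1 \<le> j \<Longrightarrow> j \<le> i \<Longrightarrow> i < n \<Longrightarrow> a (i+1) j \<le> a i j \<and> a i j \<le> a (i+1) (j+1)"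
  unfolding is_GT_def by blast

lemma is_GT_row_mono:
  assumes GT: "is_GT n a" and "i \<le> n" "1 \<le> x" "x \<le> y" "y \<le> i"
  shows "a i x \<le> a i y"
  using assms(4,5)
proof (induction y rule: dec_induct)
  case (step y)
  have "a (i - 1 + 1) y \<le> a (i-1) y \<and> a (i-1) y \<le> a (i - 1 + 1) (y+1)"
    using is_GT_interlacing[OF GT, of y "i-1"] step assms by simp
  then show ?case using step by simp
qed simp

lemma is_GT_lower_bound:
  assumes GT: "is_GT n a" and "in_tri n i j"
  shows "a n 1 \<le> a i j"
proof -
  have "a n j \<le> a i' j" if "i' \<le> n" "j \<le> i'" for i'
    using that
  proof (induction i' rule: inc_induct)
    case (step i')
    then show ?case using is_GT_interlacing[OF GT, of j i'] assms(2) by (simp add: in_tri_def)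
  qed simp
  moreover have "a n 1 \<le> a n j" using is_GT_row_mono[OF GT] assms(2) by (simp add: in_tri_def)
  ultimately show ?thesis using assms(2) by (fastforce simp: in_tri_def)
qed

lemma is_GT_upper_bound:
  assumes GT: "is_GT n a" and "in_tri n i j"
  shows "a i j \<le> a n n"
proof -
  have "\<forall>j. 1 \<le> j \<and> j \<le> i' \<longrightarrow> a i' j \<le> a n (j + (n - i'))" if "i' \<le> n" for i'
    using that
  proof (induction i' rule: inc_induct)
    case (step i')
    show ?case
    proof (intro allI impI)
      fix j assume j: "1 \<le> j \<and> j \<le> i'"
      then have "a i' j \<le> a (i'+1) (j+1)" using is_GT_interlacing[OF GT, of j i'] step by simp
      also have "\<dots> \<le> a n (j + 1 + (n - (i'+1)))" using step.IH[rule_format, of "j+1"] j by simp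
      also have "j + 1 + (n - (i'+1)) = j + (n - i')" using step by simp
      finally show "a i' j \<le> a n (j + (n - i'))" .
    qed
  qed simp
  then have "a i j \<le> a n (j + (n - i))" using assms(2) by (simp add: in_tri_def)
  also have "\<dots> \<le> a n n"
    using is_GT_row_mono[OF GT, of n "j + (n - i)" n] assms(2) by (auto simp: in_tri_def)
  finally show ?thesis .
qed

lemma finite_GT_with_bottom_row:
  assumes "1 \<le> n"
  shows "finite {a. is_GT n a \<and> bottom_row n k a}"
proof -
  let ?cells = "{c. in_tri n (fst c) (snd c)}"
  let ?bounded = "{F. \<forall>c. (c \<in> ?cells \<longrightarrow> F c \<in> {k 1..k n}) \<and> (c \<notin> ?cells \<longrightarrow> F c = 0)}"
  have "finite ?cells"
    by (rule finite_subset[of _ "{0..n} \<times> {0..n}"]) (auto simp: in_tri_def)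
  then have "finite ?bounded"
    by (rule finite_set_of_finite_funs) simp
  moreover have "{a. is_GT n a \<and> bottom_row n k a} \<subseteq> (\<lambda>F i j. F (i, j)) ` ?bounded"
  proof
    fix a assume "a \<in> {a. is_GT n a \<and> bottom_row n k a}"
    then have GT: "is_GT n a" and "a n 1 = k 1" "a n n = k n"
      using assms by (auto simp: bottom_row_def)
    then have "(\<lambda>c. a (fst c) (snd c)) \<in> ?bounded"
      using is_GT_lower_bound[OF GT] is_GT_upper_bound[OF GT] GT by (auto simp: is_GT_def)
    then show "a \<in> (\<lambda>F i j. F (i, j)) ` ?bounded"
      by (rule rev_image_eqI) simp
  qed
  ultimately show ?thesis
    using finite_subset by blast
qed

lemma prod_row_totals_no_three_equal:
  assumes "no_three_equal_above_bottom n a"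
  shows "(\<Prod>i\<in>{1..n}. pattern_row_total a i) = 2 ^ card (r_entries n a)"
proof -
  have "pattern_row_total a i
          = (\<Prod>j\<in>{1..i}. if \<not> (equals_NW a i j \<and> equals_NE a i j) then 2 else 1)"
    if "i \<in> {1..n}" for i
  proof -
    have "\<not> (equals_NW a i j \<and> flat_triangle a i j \<and> equals_NE a i (Suc j))" for j
    proof
      assume "equals_NW a i j \<and> flat_triangle a i j \<and> equals_NE a i (Suc j)"
      then have "2 \<le> j" "j + 1 < i"
        and "a (i-1) (j-1) = a (i-1) j" "a (i-1) j = a (i-1) (j+1)"
        by (auto simp: equals_NW_def equals_NE_def flat_triangle_def)
      moreover have "i - 1 < n" using that by auto
      moreover have "1 \<le> j - 1" "j + 1 \<le> i - 1" using \<open>2 \<le> j\<close> \<open>j + 1 < i\<close> by auto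
      ultimately show False
        using assms[unfolded no_three_equal_above_bottom_def, rule_format, of "i-1" "j-1" j "j+1"]
        by auto
    qed
    then show ?thesis
      using row_shape.row_total_eq_prod[OF row_shape_pattern] that by (auto intro!: prod.cong)
  qed
  then have "(\<Prod>i\<in>{1..n}. pattern_row_total a i)
      = (\<Prod>i\<in>{1..n}. \<Prod>j\<in>{1..i}. if \<not> (equals_NW a i j \<and> equals_NE a i j) then 2 else 1)"
    by (rule prod.cong[OF refl])
  also have "\<dots> = 2 ^ card (r_entries n a)"
    by (rule prod_rows_if_power_card)
      (auto simp: r_entries_def in_tri_def equals_NW_def equals_NE_def)
  finally show ?thesis .
qed

definition triple_at :: "(nat \<Rightarrow> nat \<Rightarrow> int) \<Rightarrow> nat \<Rightarrow> nat \<Rightarrow> bool" where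
  "triple_at a i p \<longleftrightarrow> 1 \<le> p \<and> p + 2 \<le> i \<and> a i p = a i (p+1) \<and> a i (p+1) = a i (p+2)"

lemma triple_at_if_three_equal:
  assumes GT: "is_GT n a" and "\<not> no_three_equal_above_bottom n a"
  obtains i p where "i < n" "triple_at a i p"
proof -
  obtain i j1 j2 j3 where i: "i < n" and j: "1 \<le> j1" "j1 < j2" "j2 < j3" "j3 \<le> i"
      and eq: "a i j1 = a i j2" "a i j2 = a i j3"
    using assms(2) unfolding no_three_equal_above_bottom_def by blast
  have "a i j1 \<le> a i (j1+1)" "a i (j1+1) \<le> a i (j1+2)" "a i (j1+2) \<le> a i j3"
    using is_GT_row_mono[OF GT, of i j1 "j1+1"] is_GT_row_mono[OF GT, of i "j1+1" "j1+2"]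
      is_GT_row_mono[OF GT, of i "j1+2" j3] i j by auto
  then have "triple_at a i j1"
    using j eq unfolding triple_at_def by auto
  with i show ?thesis by (rule that)
qed

lemma triple_at_above_quadruple:
  assumes GT: "is_GT n a" and "i \<le> n" "1 \<le> q" "q + 3 \<le> i"
    and "a i q = a i (q+1)" "a i (q+1) = a i (q+2)" "a i (q+2) = a i (q+3)"
  shows "triple_at a (i-1) q"
proof -
  have "a i t \<le> a (i-1) t \<and> a (i-1) t \<le> a i (t+1)" if "1 \<le> t" "t + 1 \<le> i - 1 + 1" for t
    using is_GT_interlacing[OF GT, of t "i-1"] that assms by simp
  from this[of q] this[of "q+1"] this[of "q+2"] have
    "a (i-1) q = a i q" "a (i-1) (q+1) = a i q" "a (i-1) (q+2) = a i q"
    using assms by (simp_all add: eval_nat_numeral)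
  then show ?thesis
    using assms unfolding triple_at_def by simp
qed

text \<open>Minimality of the row excludes a fourth equal entry next to the triple, since it would
  create a triple in the row above.\<close>

lemma row_total_below_topmost_triple:
  assumes GT: "is_GT n a" and "i < n" and triple: "triple_at a i p"
    and topmost: "\<And>q. \<not> triple_at a (i-1) q"
  shows "pattern_row_total a (i+1) = 0"
proof -
  have p: "1 \<le> p" "p + 2 \<le> i" "a i p = a i (p+1)" "a i (p+1) = a i (p+2)"
    using triple by (simp_all add: triple_at_def)
  have below1: "a (i+1) (p+1) = a i p"
    using is_GT_interlacing[OF GT, of p i] is_GT_interlacing[OF GT, of "p+1" i] p \<open>i < n\<close> by auto
  have below2: "a (i+1) (p+2) = a i p"
    using is_GT_interlacing[OF GT, of "p+1" i] is_GT_interlacing[OF GT, of "p+2" i] p \<open>i < n\<close>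
    by (auto simp: add.assoc)
  show ?thesis
  proof (rule row_shape.row_total_eq_0[OF row_shape_pattern \<open>1 \<le> p\<close>])
    show "equals_NW a (i+1) (Suc p)" "flat_triangle a (i+1) (Suc p)" "equals_NE a (i+1) (p+2)"
      using below1 below2 p
      by (auto simp: equals_NW_def equals_NE_def flat_triangle_def numeral_2_eq_2)
  next
    assume "flat_triangle a (i+1) p"
    then have "a (i+1) p = a i p" by (simp add: flat_triangle_def equals_NE_def)
    show "\<not> equals_NW a (i+1) p"
    proof
      assume "equals_NW a (i+1) p"
      then have "2 \<le> p" "a i (p-1) = a i p"
        using \<open>a (i+1) p = a i p\<close> by (auto simp: equals_NW_def)
      moreover have "p - 1 + 1 = p" "p - 1 + 2 = p + 1" "p - 1 + 3 = p + 2"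
        using \<open>2 \<le> p\<close> by auto
      ultimately have "triple_at a (i-1) (p-1)"
        using triple_at_above_quadruple[OF GT, of i "p-1"] p \<open>i < n\<close> by simp
      with topmost show False by blast
    qed
  next
    assume "flat_triangle a (i+1) (p+2)"
    then have "a (i+1) (p+3) = a i p" using below2 by (simp add: flat_triangle_def numeral_3_eq_3)
    then show "\<not> equals_NE a (i+1) (p+3)"
      using triple_at_above_quadruple[OF GT, of i p] topmost p \<open>i < n\<close>
      by (auto simp: equals_NE_def)
  qed
qed

lemma prod_row_totals_three_equal:
  assumes GT: "is_GT n a" and "\<not> no_three_equal_above_bottom n a"
  shows "(\<Prod>i\<in>{1..n}. pattern_row_total a i) = 0"
proof -
  obtain i0 p0 where "i0 < n" "triple_at a i0 p0"
    using triple_at_if_three_equal[OF assms] .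
  then obtain i where "\<exists>p. i < n \<and> triple_at a i p"
    and topmost: "\<And>i'. i' < i \<Longrightarrow> \<not> (\<exists>p. i' < n \<and> triple_at a i' p)"
    using exists_least_iff[of "\<lambda>i. \<exists>p. i < n \<and> triple_at a i p"] by blast
  then obtain p where "i < n" "triple_at a i p" by blast
  moreover have "\<not> triple_at a (i-1) q" for q
    using topmost[of "i-1"] \<open>i < n\<close> \<open>triple_at a i p\<close> by (cases "i = 0") (auto simp: triple_at_def)
  ultimately have "pattern_row_total a (i+1) = 0"
    using row_total_below_topmost_triple[OF GT] by blast
  moreover have "i + 1 \<in> {1..n}" using \<open>i < n\<close> by simp
  ultimately show ?thesis by (metis finite_atLeastAtMost prod_zero_iff)
qed

lemma sum_arrowed_decorations_eq:
  assumes "is_GT n a"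
  shows "(\<Sum>d | is_arrowed_GT n a d. arrowed_sign n a d)
       = (if no_three_equal_above_bottom n a then 2 ^ card (r_entries n a) else 0)"
  using sum_arrowed_decorations[OF assms] prod_row_totals_no_three_equal
    prod_row_totals_three_equal[OF assms]
  by simp

theorem proposition2p1:
  fixes n :: nat and k :: "nat \<Rightarrow> int"
  assumes "n \<ge> 1"
    and "\<And>j. 1 \<le> j \<Longrightarrow> j < n \<Longrightarrow> k j \<le> k (j+1)"
  shows "(\<Sum>(a,d) \<in> {(a,d). is_arrowed_GT n a d \<and> bottom_row n k a}.
            (-1::int) ^ (card (special_triangles n a d) + card (double_arrows n d)))
       = (\<Sum>a \<in> {a. is_GT n a \<and> bottom_row n k a \<and> no_three_equal_above_bottom n a}.
            (2::int) ^ card (r_entries n a))"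
proof -
  let ?G = "{a. is_GT n a \<and> bottom_row n k a}"
  have "finite ?G" using finite_GT_with_bottom_row[OF assms(1)] .
  have "finite {d. is_arrowed_GT n a d}" for a
    by (rule finite_subset[OF _ finite_triangular_arrays])
      (auto simp: triangular_arrays_def is_arrowed_GT_def)
  moreover have "{(a,d). is_arrowed_GT n a d \<and> bottom_row n k a}
      = (SIGMA a:?G. {d. is_arrowed_GT n a d})"
    by (auto simp: is_arrowed_GT_def)
  ultimately have "(\<Sum>(a,d) \<in> {(a,d). is_arrowed_GT n a d \<and> bottom_row n k a}.
            (-1::int) ^ (card (special_triangles n a d) + card (double_arrows n d)))
      = (\<Sum>a\<in>?G. if no_three_equal_above_bottom n a then 2 ^ card (r_entries n a) else 0)"
    using \<open>finite ?G\<close> by (simp add: sum.Sigma[symmetric] sum_arrowed_decorations_eq)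
  also have "\<dots> = (\<Sum>a \<in> {a. is_GT n a \<and> bottom_row n k a \<and> no_three_equal_above_bottom n a}.
            (2::int) ^ card (r_entries n a))"
    using \<open>finite ?G\<close> by (simp add: sum.inter_filter[symmetric] conj_assoc)
  finally show ?thesis .
qed

end
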